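(* Let $\rho\in\{1/2,1\}$, let $s>0$ and $\eta>0$ be real numbers, let $q\in\mathbb{C}$, and let $\epsilon<1$ be real. Define the real cubic polynomial $$f(\gamma) = -\gamma^3\eta s^2 - \gamma^2\big[(1-\epsilon+\rho)s^2 + 2\eta s\big] + \gamma\big[2(\epsilon-1)s - s\rho + \rho|q|^2 - \eta\big] + (\epsilon-1).$$ If $f$ has positive roots, then it has exactly two of them (counted with multiplicity).
   Context: The polynomial $f$ satisfies $f(\gamma)=\gamma(1+\gamma s)^2\ell'(\gamma)$, where $\ell(\gamma) = -\rho\log(1+\gamma s) + \rho|q|^2/(\gamma^{-1}+s) + (\epsilon-1)\log\gamma - \eta\gamma$ for $\gamma>0$. Here $\rho=1/2$ corresponds to a real and $\rho=1$ to a complex signal model, $\epsilon$ is a gamma shape parameter and $\eta>0$ a gamma rate parameter. *)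

theory Defs
  imports "HOL-Analysis.Analysis" "HOL-Computational_Algebra.Polynomial"
begin

definition f_poly :: "real \<Rightarrow> real \<Rightarrow> real \<Rightarrow> complex \<Rightarrow> real \<Rightarrow> real poly" where
  "f_poly \<rho> s \<eta> q \<epsilon> =
     [: \<epsilon> - 1,
        2 * (\<epsilon> - 1) * s - s * \<rho> + \<rho> * (cmod q)^2 - \<eta>,
        - ((1 - \<epsilon> + \<rho>) * s^2 + 2 * \<eta> * s),
        - \<eta> * s^2 :]"

end

theory Submission
  imports Defs "HOL-Library.Quadratic_Discriminant"
begin

text \<open>Both the constant term \<open>\<epsilon> - 1\<close> and the leading coefficient \<open>-\<eta> s\<^sup>2\<close> of \<open>f\<close>
  are negative, so the product of its three roots is negative. Dividing \<open>f\<close> by \<open>\<gamma> - r\<close> for a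
  positive root \<open>r\<close> leaves a quadratic whose constant term and leading coefficient have
  opposite signs; its roots are therefore real and of opposite signs, and together with \<open>r\<close>
  exactly two roots are positive.\<close>

lemma proots_linear_factor_neg: "proots [:-x, 1:] = {#x#}" for x :: "'a::idom"
  using proots_linear_factor[of "-x"] by simp

lemma sum_order_positive_roots:
  fixes p :: "'a::linordered_idom poly"
  assumes "p \<noteq> 0"
  shows "(\<Sum>x \<in> {x. 0 < x \<and> poly p x = 0}. order x p) = size (filter_mset ((<) 0) (proots p))"
proof -
  have "{x. 0 < x \<and> poly p x = 0} = set_mset (filter_mset ((<) 0) (proots p))"
    using assms by auto
  then show ?thesis
    using assms by (simp add: size_multiset_overloaded_eq)
qed

lemma quadratic_proots_opposite_signs:
  fixes c0 c1 c2 :: real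
  assumes "c0 * c2 < 0"
  obtains u v where "u < 0" "0 < v" "proots [:c0, c1, c2:] = {#u, v#}"
proof -
  define q where "q = [:c0, c1, c2:]"
  have "c2 \<noteq> 0" using assms by auto
  moreover have "discrim c2 c1 c0 \<ge> 0"
  proof -
    have "4 * c2 * c0 < 0" using assms by (simp add: mult.commute mult.assoc)
    then show ?thesis unfolding discrim_def by (smt (verit) zero_le_power2)
  qed
  ultimately obtain x where "c2 * x\<^sup>2 + c1 * x + c0 = 0"
    using discriminant_nonneg_ex by blast
  then have "poly q x = 0"
    unfolding q_def by (simp add: algebra_simps power2_eq_square)
  define y where "y = - (c1 + x * c2) / c2"
  have div_eq: "synthetic_div q x = smult c2 [:-y, 1:]"
    using \<open>c2 \<noteq> 0\<close> by (simp add: q_def y_def)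
  have "q = [:-x, 1:] * synthetic_div q x"
    using synthetic_div_correct'[of x q] \<open>poly q x = 0\<close> by simp
  also have "\<dots> = smult c2 ([:-x, 1:] * [:-y, 1:])"
    by (simp only: div_eq mult_smult_right)
  finally have q_eq: "q = smult c2 ([:-x, 1:] * [:-y, 1:])" .
  have "c0 = c2 * (x * y)"
    using arg_cong[OF q_eq, of "\<lambda>p. poly p 0"] by (simp add: q_def)
  then have "c2\<^sup>2 * (x * y) < 0"
    using assms by (simp add: power2_eq_square mult_ac)
  then have "x * y < 0"
    by (simp add: mult_less_0_iff)
  have "proots q = {#x, y#}"
    unfolding q_eq using \<open>c2 \<noteq> 0\<close>
    by (simp add: proots_mult proots_linear_factor_neg del: mult_pCons_left mult_pCons_right)
  then show ?thesis
    using that \<open>x * y < 0\<close> unfolding q_def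
    by (cases "x < 0") (auto simp: mult_less_0_iff add_mset_commute)
qed

lemma cubic_proots_with_positive_root:
  fixes a0 a1 a2 a3 r :: real
  assumes "0 < a0 * a3" and "0 < r" and "poly [:a0, a1, a2, a3:] r = 0"
  obtains u v where "u < 0" "0 < v" "proots [:a0, a1, a2, a3:] = {#r, u, v#}"
proof -
  define p where "p = [:a0, a1, a2, a3:]"
  define c0 where "c0 = a1 + r * (a2 + r * a3)"
  have div_eq: "synthetic_div p r = [:c0, a2 + r * a3, a3:]"
    by (simp add: p_def c0_def)
  have "poly p r = 0" using assms(3) by (simp add: p_def)
  then have p_eq: "p = [:-r, 1:] * synthetic_div p r"
    using synthetic_div_correct'[of r p] by (simp del: mult_pCons_left mult_pCons_right)
  have "a0 = - r * c0"
    using assms(3) unfolding c0_def by (simp add: algebra_simps)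
  then have "r * (c0 * a3) < 0"
    using assms(1) by (simp add: algebra_simps)
  then have "c0 * a3 < 0"
    using assms(2) by (simp add: mult_less_0_iff)
  then obtain u v where "u < 0" "0 < v" and roots_div: "proots (synthetic_div p r) = {#u, v#}"
    using quadratic_proots_opposite_signs div_eq by metis
  have "synthetic_div p r \<noteq> 0"
    using roots_div by auto
  from p_eq have "proots p = proots ([:-r, 1:] * synthetic_div p r)"
    by (rule arg_cong)
  also have "\<dots> = {#r, u, v#}"
    using \<open>synthetic_div p r \<noteq> 0\<close>
    by (simp add: proots_mult proots_linear_factor_neg roots_div del: mult_pCons_left)
  finally show ?thesis
    using that \<open>u < 0\<close> \<open>0 < v\<close> unfolding p_def by blast
qed

theorem lemma1:
  fixes \<rho> s \<eta> \<epsilon> :: real and q :: complex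
  assumes "\<rho> \<in> {1/2, 1}" and "s > 0" and "\<eta> > 0" and "\<epsilon> < 1"
    and "\<exists>\<gamma>>0. poly (f_poly \<rho> s \<eta> q \<epsilon>) \<gamma> = 0"
  shows "(\<Sum>\<gamma> \<in> {\<gamma>. \<gamma> > 0 \<and> poly (f_poly \<rho> s \<eta> q \<epsilon>) \<gamma> = 0}.
            order \<gamma> (f_poly \<rho> s \<eta> q \<epsilon>)) = 2"
proof -
  let ?f = "f_poly \<rho> s \<eta> q \<epsilon>"
  obtain r where "r > 0" "poly ?f r = 0"
    using assms(5) by blast
  moreover have "0 < (\<epsilon> - 1) * (- \<eta> * s^2)"
    using assms(2-4) by (intro mult_neg_neg) auto
  ultimately obtain u v where "u < 0" "0 < v" and roots: "proots ?f = {#r, u, v#}"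
    using cubic_proots_with_positive_root unfolding f_poly_def by metis
  then have "?f \<noteq> 0"
    by auto
  then show ?thesis
    using \<open>r > 0\<close> \<open>u < 0\<close> \<open>0 < v\<close> by (simp add: sum_order_positive_roots roots)
qed

end
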